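(* Let $K$ be a field, $c\in K\setminus\{0\}$, $n\ge1$, let $f$ be a $c$-frieze of order $n$ over $K$, and put $s=f(0,n)$, $t=f(1,n+1)$. Then for every integer $k$ with $0\le k\le n$ and every $i\in\mathbb{Z}$: (a) $f(2i,2i+k-1)=\dfrac{f(2i-1,2i+k-1)\,f(2i,2i+n-1)}{t}+\dfrac{f(2i-2,2i+k-1)}{c}$; (b) $f(2i+1,2i+k)=\dfrac{f(2i,2i+k)\,f(2i+1,2i+n)}{s}+\dfrac{f(2i-1,2i+k)}{c}$.
   Context: The $c$-continuant polynomials $P_k=P_k^c$ ($k\ge-1$) are defined by $P_{-1}=0$, $P_0=1$, and for $k\ge1$, $P_k(x_1,\dots,x_k)=x_kP_{k-1}(x_1,\dots,x_{k-1})+cP_{k-2}(x_1,\dots,x_{k-2})$. A family $(x_i)_{i\in\mathbb{Z}}$ in $K$ is $n$-admissible if $P_{n+2}(x_i,\dots,x_{i+n+1})=0$ for all $i$. Let $\mathbb{B}_n=\{(i,j)\in\mathbb{Z}^2:-2\le j-i\le n+1\}$. A $c$-frieze of order $n$ is a function $f:\mathbb{B}_n\to K$ for which there is an $n$-admissible family $(x_i)$ with $f(i,j)=P_{j-i+1}(x_i,\dots,x_j)$ for all $(i,j)\in\mathbb{B}_n$. It is known that $f(2i,2i+n)=s$, $f(2i+1,2i+n+1)=t$ for all $i$ and $st=(-c)^{n+1}$, so $s,t\neq0$. *)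

theory Defs
  imports Main
begin

(* c-continuant of a REVERSED argument list: contr c [x_k, ..., x_1] = P_k(x_1,...,x_k) *)
fun contr :: "'a::comm_ring_1 \<Rightarrow> 'a list \<Rightarrow> 'a" where
  "contr c [] = 1"
| "contr c [x] = x"
| "contr c (x # y # ys) = x * contr c (y # ys) + c * contr c ys"

(* P_{j-i+1}(x_i,...,x_j), with P_{-1} = 0 (and 0 for shorter, never used) *)
definition cseg :: "'a::comm_ring_1 \<Rightarrow> (int \<Rightarrow> 'a) \<Rightarrow> int \<Rightarrow> int \<Rightarrow> 'a" where
  "cseg c x i j = (if j - i + 1 < 0 then 0 else contr c (rev (map x [i..j])))"

definition admissible :: "'a::comm_ring_1 \<Rightarrow> nat \<Rightarrow> (int \<Rightarrow> 'a) \<Rightarrow> bool" where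
  "admissible c n x \<longleftrightarrow> (\<forall>i. cseg c x i (i + int n + 1) = 0)"

definition Bn :: "nat \<Rightarrow> (int \<times> int) set" where
  "Bn n = {(i, j). -2 \<le> j - i \<and> j - i \<le> int n + 1}"

definition is_frieze :: "'a::comm_ring_1 \<Rightarrow> nat \<Rightarrow> (int \<Rightarrow> int \<Rightarrow> 'a) \<Rightarrow> bool" where
  "is_frieze c n f \<longleftrightarrow>
     (\<exists>x. admissible c n x \<and> (\<forall>(i, j) \<in> Bn n. f i j = cseg c x i j))"

end

theory Submission
  imports Defs
begin

text \<open>Write \<open>T b\<close> for the width-\<open>(n+1)\<close> continuant starting at \<open>x b\<close>, i.e. the frieze entry
  \<open>f b (b+n)\<close>. Expanding the vanishing continuant of width \<open>n+2\<close> starting at \<open>x b\<close> along its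
  first variable gives \<open>x b * T (b+1) + c * f (b+2) (b+n+1) = 0\<close>, which solves for \<open>x b\<close>;
  substituting this into the first-variable expansion
  \<open>f b (b+k+1) = x b * f (b+1) (b+k+1) + c * f (b+2) (b+k+1)\<close> gives the recurrence. Finally the
  determinant identity for continuants shows \<open>T b * T (b+1) = (-c)^(n+1)\<close>, so \<open>T\<close> never vanishes
  and is \<open>2\<close>-periodic, whence \<open>T\<close> is \<open>s\<close> at even and \<open>t\<close> at odd positions.\<close>

fun continuant :: "'a::comm_ring_1 \<Rightarrow> (int \<Rightarrow> 'a) \<Rightarrow> int \<Rightarrow> nat \<Rightarrow> 'a" where
  "continuant c x i 0 = 1"
| "continuant c x i (Suc 0) = x i"
| "continuant c x i (Suc (Suc m)) =
     x (i + int m + 1) * continuant c x i (Suc m) + c * continuant c x i m"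

lemma rev_map_upto_snoc:
  "rev (map x [i..i + int m]) = x (i + int m) # rev (map x [i..i + int m - 1])"
  by (subst upto_rec2) auto

lemma cseg_eq_continuant: "cseg c x i (i + int m - 1) = continuant c x i m"
proof (induction c x i m rule: continuant.induct)
  case (1 c x i)
  then show ?case by (simp add: cseg_def)
next
  case (2 c x i)
  then show ?case by (simp add: cseg_def)
next
  case (3 c x i m)
  have "rev (map x [i..i + int (Suc m)])
      = x (i + int m + 1) # x (i + int m) # rev (map x [i..i + int m - 1])"
    using rev_map_upto_snoc[of x i "Suc m"] rev_map_upto_snoc[of x i m]
    by (simp add: algebra_simps)
  moreover have "i + int (Suc (Suc m)) - 1 = i + int (Suc m)"
    by simp
  ultimately have "cseg c x i (i + int (Suc (Suc m)) - 1)
      = x (i + int m + 1) * contr c (x (i + int m) # rev (map x [i..i + int m - 1]))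
        + c * contr c (rev (map x [i..i + int m - 1]))"
    unfolding cseg_def by (simp only:) simp
  also have "contr c (x (i + int m) # rev (map x [i..i + int m - 1])) = continuant c x i (Suc m)"
    using "3.IH"(1) rev_map_upto_snoc[of x i m] by (simp add: cseg_def)
  also have "contr c (rev (map x [i..i + int m - 1])) = continuant c x i m"
    using "3.IH"(2) by (simp add: cseg_def)
  finally show ?case
    by simp
qed

lemma continuant_expand_first:
  "continuant c x i (Suc (Suc m)) =
     x i * continuant c x (i + 1) (Suc m) + c * continuant c x (i + 2) m"
proof (induction m rule: induct_nat_012)
  case (ge2 m)
  have "continuant c x i (Suc (Suc (Suc (Suc m)))) =
      x (i + int m + 3) * continuant c x i (Suc (Suc (Suc m))) + c * continuant c x i (Suc (Suc m))"
    by (simp add: algebra_simps)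
  moreover have "continuant c x (i + 1) (Suc (Suc (Suc m))) =
      x (i + int m + 3) * continuant c x (i + 1) (Suc (Suc m)) + c * continuant c x (i + 1) (Suc m)"
    by (simp add: algebra_simps)
  moreover have "continuant c x (i + 2) (Suc (Suc m)) =
      x (i + int m + 3) * continuant c x (i + 2) (Suc m) + c * continuant c x (i + 2) m"
    by (simp add: algebra_simps)
  ultimately show ?case
    using ge2.IH by (simp only:) (simp add: algebra_simps)
qed (simp_all add: algebra_simps)

lemma continuant_det:
  "continuant c x i (Suc (Suc m)) * continuant c x (i + 1) m
     - continuant c x i (Suc m) * continuant c x (i + 1) (Suc m) = c * (-c) ^ m"
proof (induction m)
  case 0
  then show ?case by (simp add: algebra_simps)
next
  case (Suc m)
  have "continuant c x i (Suc (Suc (Suc m))) =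
      x (i + int m + 2) * continuant c x i (Suc (Suc m)) + c * continuant c x i (Suc m)"
    and "continuant c x (i + 1) (Suc (Suc m)) =
      x (i + int m + 2) * continuant c x (i + 1) (Suc m) + c * continuant c x (i + 1) m"
    by (simp_all add: algebra_simps)
  then have "continuant c x i (Suc (Suc (Suc m))) * continuant c x (i + 1) (Suc m)
      - continuant c x i (Suc (Suc m)) * continuant c x (i + 1) (Suc (Suc m))
    = - c * (continuant c x i (Suc (Suc m)) * continuant c x (i + 1) m
      - continuant c x i (Suc m) * continuant c x (i + 1) (Suc m))"
    by (simp only:) (simp add: algebra_simps del: continuant.simps)
  then show ?case
    using Suc.IH by simp
qed

lemma admissible_continuant_eq_0:
  assumes "admissible c n x"
  shows "continuant c x i (n + 2) = 0"
proof -
  have "i + int (n + 2) - 1 = i + int n + 1"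
    by simp
  then show ?thesis
    using assms cseg_eq_continuant[of c x i "n + 2"] unfolding admissible_def by metis
qed

lemma admissible_continuant_mult:
  assumes "admissible c n x"
  shows "continuant c x i (n + 1) * continuant c x (i + 1) (n + 1) = (-c) ^ (n + 1)"
proof -
  have "- (continuant c x i (n + 1) * continuant c x (i + 1) (n + 1)) = c * (-c) ^ n"
    using continuant_det[of c x i n] admissible_continuant_eq_0[OF assms, of i]
    by (simp del: continuant.simps)
  then show ?thesis
    by (simp add: minus_equation_iff)
qed

lemma admissible_continuant_nonzero:
  fixes c :: "'a::field"
  assumes "c \<noteq> 0" "admissible c n x"
  shows "continuant c x i (n + 1) \<noteq> 0"
  using admissible_continuant_mult[OF assms(2), of i] assms(1) by auto

lemma admissible_continuant_periodic:
  fixes c :: "'a::field"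
  assumes "c \<noteq> 0" "admissible c n x"
  shows "continuant c x (i + 2) (n + 1) = continuant c x i (n + 1)"
proof -
  have "continuant c x (i + 1) (n + 1) * continuant c x (i + 2) (n + 1)
      = continuant c x (i + 1) (n + 1) * continuant c x i (n + 1)"
    using admissible_continuant_mult[OF assms(2), of i]
      admissible_continuant_mult[OF assms(2), of "i + 1"]
    by (simp add: add.assoc mult.commute)
  then show ?thesis
    using admissible_continuant_nonzero[OF assms, of "i + 1"] by simp
qed

lemma admissible_continuant_recurrence:
  fixes c :: "'a::field"
  assumes "c \<noteq> 0" "admissible c n x"
  shows "continuant c x (i + 2) k =
      continuant c x (i + 1) (Suc k) * continuant c x (i + 2) n / continuant c x (i + 1) (n + 1)
      + continuant c x i (Suc (Suc k)) / c"
proof -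
  have "x i * continuant c x (i + 1) (n + 1) + c * continuant c x (i + 2) n = 0"
    using continuant_expand_first[of c x i n] admissible_continuant_eq_0[OF assms(2), of i]
    by (simp del: continuant.simps)
  then have "x i * continuant c x (i + 1) (n + 1) = - (c * continuant c x (i + 2) n)"
    by (simp add: eq_neg_iff_add_eq_0)
  then have "x i = - c * continuant c x (i + 2) n / continuant c x (i + 1) (n + 1)"
    using admissible_continuant_nonzero[OF assms, of "i + 1"] by (simp add: field_simps)
  then show ?thesis
    using continuant_expand_first[of c x i k] assms(1) by (simp add: field_simps)
qed

lemma periodic_2_shift:
  fixes g :: "int \<Rightarrow> 'b"
  assumes "\<And>j. g (j + 2) = g j"
  shows "g (j + 2 * m) = g j"
proof (induction m rule: int_induct[where k = 0])
  case (step1 m)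
  then show ?case
    using assms[of "j + 2 * m"] by (simp add: algebra_simps)
next
  case (step2 m)
  then show ?case
    using assms[of "j + 2 * (m - 1)"] by (simp add: algebra_simps)
qed simp

lemma frieze_eq_continuant:
  assumes "\<forall>(i, j) \<in> Bn n. f i j = cseg c x i j" "j = i + int m - 1" "m \<le> n + 2"
  shows "f i j = continuant c x i m"
  using assms cseg_eq_continuant[of c x i m] unfolding Bn_def by auto

lemma frieze_periodic:
  fixes c :: "'a::field"
  assumes "c \<noteq> 0" "is_frieze c n f"
  shows "f (i + 2 * m) (i + 2 * m + int n) = f i (i + int n)"
proof -
  obtain x where adm: "admissible c n x" and fx: "\<forall>(i, j) \<in> Bn n. f i j = cseg c x i j"
    using assms(2) unfolding is_frieze_def by blast
  have "f i (i + int n) = continuant c x i (n + 1)" for i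
    by (rule frieze_eq_continuant[OF fx]) simp_all
  then show ?thesis
    using periodic_2_shift[of "\<lambda>i. continuant c x i (n + 1)"]
      admissible_continuant_periodic[OF assms(1) adm] by simp
qed

lemma frieze_recurrence:
  fixes c :: "'a::field"
  assumes "c \<noteq> 0" "is_frieze c n f" "0 \<le> k" "k \<le> int n"
  shows "f i (i + k - 1) =
      f (i - 1) (i + k - 1) * f i (i + int n - 1) / f (i - 1) (i - 1 + int n)
      + f (i - 2) (i + k - 1) / c"
proof -
  obtain x where adm: "admissible c n x" and fx: "\<forall>(i, j) \<in> Bn n. f i j = cseg c x i j"
    using assms(2) unfolding is_frieze_def by blast
  obtain m where m: "k = int m" "m \<le> n"
    using assms(3,4) by (metis nat_0_le nat_le_iff)
  have "f i (i + k - 1) = continuant c x i m"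
    and "f (i - 1) (i + k - 1) = continuant c x (i - 1) (Suc m)"
    and "f (i - 2) (i + k - 1) = continuant c x (i - 2) (Suc (Suc m))"
    and "f i (i + int n - 1) = continuant c x i n"
    and "f (i - 1) (i - 1 + int n) = continuant c x (i - 1) (n + 1)"
    by (rule frieze_eq_continuant[OF fx]; use m in simp)+
  then show ?thesis
    using admissible_continuant_recurrence[OF assms(1) adm, of "i - 2" m] by simp
qed

theorem mainTheorem9:
  fixes c :: "'a::field" and n :: nat and f :: "int \<Rightarrow> int \<Rightarrow> 'a"
  assumes "c \<noteq> 0" and "n \<ge> 1" and "is_frieze c n f"
  defines "s \<equiv> f 0 (int n)" and "t \<equiv> f 1 (int n + 1)"
  shows "\<forall>k::int. \<forall>i::int. 0 \<le> k \<and> k \<le> int n \<longrightarrow>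
      f (2*i) (2*i + k - 1) = f (2*i - 1) (2*i + k - 1) * f (2*i) (2*i + int n - 1) / t
                               + f (2*i - 2) (2*i + k - 1) / c
    \<and> f (2*i + 1) (2*i + k) = f (2*i) (2*i + k) * f (2*i + 1) (2*i + int n) / s
                               + f (2*i - 1) (2*i + k) / c"
proof (intro allI impI conjI)
  fix k i :: int
  assume k: "0 \<le> k \<and> k \<le> int n"
  have "f (2*i - 1) (2*i - 1 + int n) = t"
    using frieze_periodic[OF assms(1,3), of 1 "i - 1"] by (simp add: t_def algebra_simps)
  then show "f (2*i) (2*i + k - 1) = f (2*i - 1) (2*i + k - 1) * f (2*i) (2*i + int n - 1) / t
      + f (2*i - 2) (2*i + k - 1) / c"
    using frieze_recurrence[OF assms(1,3), of k "2*i"] k by simp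
  have "f (2*i) (2*i + int n) = s"
    using frieze_periodic[OF assms(1,3), of 0 i] by (simp add: s_def)
  then show "f (2*i + 1) (2*i + k) = f (2*i) (2*i + k) * f (2*i + 1) (2*i + int n) / s
      + f (2*i - 1) (2*i + k) / c"
    using frieze_recurrence[OF assms(1,3), of k "2*i + 1"] k by (simp add: algebra_simps)
qed

end
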